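(* Let $(\alpha,\theta)\in\Omega$. Let $\varphi$ be the solution of $\varphi'^2=P_{\alpha,\theta}(\cos\varphi)$ such that $\varphi(0)=0$ and $\varphi'(0)\le0$. Then: 1. $\varphi'(u)<0$ for all $u$; 2. $\varphi$ is a decreasing bijection from $\mathbb{R}$ onto $\mathbb{R}$; 3. there exists a real number $U>0$ such that $\varphi(u+U)=\varphi(u)-\pi$ for all $u\in\mathbb{R}$; 4. $\varphi$ is odd.
   Context: For $\alpha>0$ and $\theta\in\mathbb{R}$ set $C_{\alpha,\theta}=\frac{\sin(2\theta)}{2\alpha}$ and $P_{\alpha,\theta}(x)=\alpha^2+\cos(2\theta)x^2-C_{\alpha,\theta}^2x^4$. Let $\theta^+_\alpha=\pi/2$ if $\alpha>1$, and $\theta^+_\alpha=\frac12\arccos(1-2\alpha^2)$ if $\alpha\le1$. Set $\Omega=\{(\alpha,\theta)\in\mathbb{R}^2:\alpha>0,\ -\theta^+_\alpha<\theta<\theta^+_\alpha\}$. *)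

theory Defs
  imports Complex_Main
begin

definition C_at :: "real \<Rightarrow> real \<Rightarrow> real" where
  "C_at \<alpha> \<theta> = sin (2 * \<theta>) / (2 * \<alpha>)"

definition P_at :: "real \<Rightarrow> real \<Rightarrow> real \<Rightarrow> real" where
  "P_at \<alpha> \<theta> x = \<alpha>^2 + cos (2 * \<theta>) * x^2 - (C_at \<alpha> \<theta>)^2 * x^4"

definition theta_plus :: "real \<Rightarrow> real" where
  "theta_plus \<alpha> = (if \<alpha> > 1 then pi / 2 else arccos (1 - 2 * \<alpha>^2) / 2)"

definition Omega :: "(real \<times> real) set" where
  "Omega = {(\<alpha>, \<theta>). \<alpha> > 0 \<and> - theta_plus \<alpha> < \<theta> \<and> \<theta> < theta_plus \<alpha>}"

end

theory Submission
  imports Defs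
begin

text \<open>
  On \<open>\<Omega>\<close> the polynomial \<open>P\<^sub>\<alpha>\<^sub>,\<^sub>\<theta>\<close> is bounded below by a positive constant \<open>m\<close> on \<open>[-1,1]\<close>:
  as a function of \<open>t = x\<^sup>2\<close> it is concave, so it suffices to check \<open>t = 0\<close> and \<open>t = 1\<close>.
  Hence \<open>\<phi>'\<close> never vanishes, so by Darboux's theorem it keeps the sign of \<open>\<phi>'(0)\<close>, and
  \<open>\<phi>\<close> solves the autonomous equation \<open>\<phi>' = F(\<phi>)\<close> with \<open>F = -\<surd>(P(cos \<cdot>)) \<le> -\<surd>m\<close>.
  Thus \<open>\<phi>\<close> is a decreasing bijection of \<open>\<real>\<close>, and its inverse shows that such a solution
  is determined by its value at \<open>0\<close>. Since \<open>F\<close> is even and \<open>\<pi>\<close>-periodic,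
  \<open>u \<mapsto> -\<phi>(-u)\<close> and \<open>u \<mapsto> \<phi>(u + U) + \<pi>\<close>, where \<open>\<phi>(U) = -\<pi>\<close>, solve the same equation
  with the same initial value, and therefore coincide with \<open>\<phi>\<close>.
\<close>

lemma Darboux_DERIV_zero:
  fixes f f' :: "real \<Rightarrow> real"
  assumes "a < b" and f': "\<And>x. (f has_real_derivative f' x) (at x)"
    and "f' a < 0" and "f' b > 0"
  shows "\<exists>c. a < c \<and> c < b \<and> f' c = 0"
proof -
  have "continuous_on {a..b} f"
    using f' by (meson DERIV_continuous continuous_at_imp_continuous_on)
  with \<open>a < b\<close> obtain c where c: "c \<in> {a..b}" and c_min: "\<forall>y\<in>{a..b}. f c \<le> f y"
    using continuous_attains_inf[OF compact_Icc, of a b f] by auto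
  obtain d1 where "d1 > 0" and d1: "\<forall>h>0. h < d1 \<longrightarrow> f (a + h) < f a"
    using DERIV_neg_dec_right[OF f' \<open>f' a < 0\<close>] by blast
  obtain d2 where "d2 > 0" and d2: "\<forall>h>0. h < d2 \<longrightarrow> f (b - h) < f b"
    using DERIV_pos_inc_left[OF f' \<open>f' b > 0\<close>] by blast
  define h where "h = min (min d1 d2) (b - a) / 2"
  have "0 < h" "h < d1" "h < d2" "h < b - a"
    using \<open>d1 > 0\<close> \<open>d2 > 0\<close> \<open>a < b\<close> by (auto simp: h_def min_def)
  then have "f (a + h) < f a" "a + h \<in> {a..b}" "f (b - h) < f b" "b - h \<in> {a..b}"
    using d1 d2 by auto
  with c_min have "c \<noteq> a" "c \<noteq> b" by (metis leD)+
  with c have "a < c" "c < b" by auto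
  moreover have "f' c = 0"
  proof (rule DERIV_local_min[OF f'])
    show "0 < min (c - a) (b - c)" using \<open>a < c\<close> \<open>c < b\<close> by auto
    show "\<forall>y. \<bar>c - y\<bar> < min (c - a) (b - c) \<longrightarrow> f c \<le> f y"
      using c_min by (auto simp: abs_less_iff)
  qed
  ultimately show ?thesis by blast
qed

lemma DERIV_nonvanishing_neg:
  fixes f f' :: "real \<Rightarrow> real"
  assumes f': "\<And>x. (f has_real_derivative f' x) (at x)"
    and nonzero: "\<And>x. f' x \<noteq> 0" and "f' a < 0"
  shows "f' b < 0"
proof (rule ccontr)
  assume "\<not> f' b < 0"
  with nonzero have "f' b > 0" by (metis linorder_neqE_linordered_idom)
  consider "a < b" | "b < a" using \<open>f' a < 0\<close> \<open>f' b > 0\<close> by fastforce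
  then show False
  proof cases
    case 1
    then show False
      using Darboux_DERIV_zero[OF 1 f' \<open>f' a < 0\<close> \<open>f' b > 0\<close>] nonzero by blast
  next
    case 2
    have "\<exists>c. b < c \<and> c < a \<and> - f' c = 0"
      by (rule Darboux_DERIV_zero[where f = "\<lambda>x. - f x"])
        (use 2 \<open>f' a < 0\<close> \<open>f' b > 0\<close> f' in \<open>auto intro: DERIV_minus\<close>)
    then show False using nonzero by auto
  qed
qed

lemma DERIV_le_neg_const_imp_bij:
  fixes f f' :: "real \<Rightarrow> real"
  assumes f': "\<And>x. (f has_real_derivative f' x) (at x)"
    and "s > 0" and bound: "\<And>x. f' x \<le> - s"
  shows "bij f"
proof -
  have g': "f' x + s \<le> 0" for x
    using bound[of x] by linarith
  have antimono: "f b + s * b \<le> f a + s * a" if "a \<le> b" for a b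
    by (rule deriv_nonpos_imp_antimono[where g = "\<lambda>x. f x + s * x" and g' = "\<lambda>x. f' x + s"])
      (use f' g' that in \<open>auto intro!: derivative_eq_intros\<close>)
  have "\<exists>x. f x = y" for y
  proof -
    define b where "b = \<bar>y - f 0\<bar> / s"
    have "b \<ge> 0" "s * b = \<bar>y - f 0\<bar>"
      using \<open>s > 0\<close> by (simp_all add: b_def)
    then have "f b \<le> y" "y \<le> f (- b)"
      using antimono[of 0 b] antimono[of "- b" 0] by auto
    moreover have "isCont f x" for x
      using f' DERIV_isCont by blast
    ultimately show ?thesis
      using IVT2[of f b y "- b"] \<open>b \<ge> 0\<close> by auto
  qed
  then have "surj f" by (metis surjI)
  moreover have "f' x < 0" for x
    using bound[of x] \<open>s > 0\<close> by linarith
  then have "f y < f x" if "x < y" for x y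
    using DERIV_neg_imp_decreasing[OF that] f' by blast
  then have "inj f"
    by (intro linorder_injI) fastforce
  ultimately show ?thesis by (simp add: bij_def)
qed

lemma autonomous_ode_unique:
  fixes \<phi> \<psi> F :: "real \<Rightarrow> real"
  assumes \<phi>: "\<And>u. (\<phi> has_real_derivative F (\<phi> u)) (at u)"
    and \<psi>: "\<And>u. (\<psi> has_real_derivative F (\<psi> u)) (at u)"
    and F_nonzero: "\<And>y. F y \<noteq> 0" and "bij \<psi>" and "\<phi> 0 = \<psi> 0"
  shows "\<phi> u = \<psi> u"
proof -
  define g where "g = inv \<psi>"
  have g_\<psi>: "g (\<psi> x) = x" for x
    using \<open>bij \<psi>\<close> by (simp add: g_def bij_is_inj)
  have \<psi>_g: "\<psi> (g y) = y" for y
    using \<open>bij \<psi>\<close> by (simp add: g_def bij_is_surj surj_f_inv_f)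
  have "isCont g y" for y
    using isCont_inverse_function[where d = 1 and x = "g y" and f = \<psi>] g_\<psi> \<psi>_g
      \<psi> DERIV_isCont by fastforce
  then have g: "(g has_real_derivative inverse (F y)) (at y)" for y
    using DERIV_inverse_function[where f = \<psi> and a = "y - 1" and b = "y + 1"]
      \<psi>[of "g y"] \<psi>_g F_nonzero by auto
  have "((\<lambda>u. g (\<phi> u) - u) has_real_derivative 0) (at u)" for u
    using DERIV_chain2[OF g \<phi>, of u] F_nonzero by (auto intro!: derivative_eq_intros)
  then have "g (\<phi> u) - u = g (\<phi> 0) - 0"
    by (intro DERIV_isconst_all) blast
  then have "g (\<phi> u) = g (\<psi> u)"
    using \<open>\<phi> 0 = \<psi> 0\<close> g_\<psi> by simp
  then show ?thesis using \<psi>_g by metis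
qed

lemma autonomous_ode_periodic:
  fixes \<phi> F :: "real \<Rightarrow> real"
  assumes \<phi>: "\<And>u. (\<phi> has_real_derivative F (\<phi> u)) (at u)"
    and F_neg: "\<And>y. F y < 0" and "bij \<phi>"
    and F_periodic: "\<And>y. F (y + p) = F y" and "p > 0"
  shows "\<exists>U>0. \<forall>u. \<phi> (u + U) = \<phi> u - p"
proof -
  obtain U where U: "\<phi> U = \<phi> 0 - p"
    using \<open>bij \<phi>\<close> by (metis bij_pointE)
  have "\<phi> y < \<phi> x" if "x < y" for x y
    using DERIV_neg_imp_decreasing[OF that] \<phi> F_neg by blast
  moreover have "\<phi> U < \<phi> 0"
    using U \<open>p > 0\<close> by simp
  ultimately have "U > 0"
    by (cases U "0::real" rule: linorder_cases) force+
  have "((\<lambda>u. \<phi> (u + U) + p) has_real_derivative F (\<phi> (u + U) + p)) (at u)" for u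
    using DERIV_add[OF \<phi>[of "u + U", unfolded DERIV_shift] DERIV_const] F_periodic by simp
  then have "\<phi> (u + U) + p = \<phi> u" for u
    by (rule autonomous_ode_unique[OF _ \<phi> F_neg[THEN less_imp_neq] \<open>bij \<phi>\<close>]) (simp add: U)
  with \<open>U > 0\<close> show ?thesis
    by (metis add_diff_cancel_right')
qed

lemma autonomous_ode_odd:
  fixes \<phi> F :: "real \<Rightarrow> real"
  assumes \<phi>: "\<And>u. (\<phi> has_real_derivative F (\<phi> u)) (at u)"
    and F_nonzero: "\<And>y. F y \<noteq> 0" and "bij \<phi>"
    and F_even: "\<And>y. F (- y) = F y" and "\<phi> 0 = 0"
  shows "\<phi> (- u) = - \<phi> u"
proof -
  have "((\<lambda>u. - \<phi> (- u)) has_real_derivative F (- \<phi> (- u))) (at u)" for u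
    using DERIV_minus[OF \<phi>[of "- u", unfolded DERIV_mirror]] F_even by simp
  then have "- \<phi> (- u) = \<phi> u"
    by (rule autonomous_ode_unique[OF _ \<phi> F_nonzero \<open>bij \<phi>\<close>]) (simp add: \<open>\<phi> 0 = 0\<close>)
  then show ?thesis by simp
qed

lemma Omega_cos_gt:
  assumes "(\<alpha>, \<theta>) \<in> Omega"
  shows "1 - 2 * \<alpha>^2 < cos (2 * \<theta>)"
proof (cases "\<alpha> > 1")
  case True
  then have "\<alpha>^2 > 1" by (simp add: one_less_power)
  then show ?thesis using cos_ge_minus_one[of "2 * \<theta>"] by linarith
next
  case False
  define a where "a = 1 - 2 * \<alpha>^2"
  have "\<alpha> > 0" using assms by (simp add: Omega_def)
  with False have "-1 \<le> a" "a \<le> 1"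
    by (auto simp: a_def power2_eq_square intro: mult_le_one)
  moreover have "\<bar>2 * \<theta>\<bar> < arccos a"
    using assms False by (auto simp: Omega_def theta_plus_def a_def)
  ultimately have "cos (arccos a) < cos \<bar>2 * \<theta>\<bar>"
    using arccos_bounded[of a] by (subst cos_mono_less_eq) auto
  with \<open>-1 \<le> a\<close> \<open>a \<le> 1\<close> show ?thesis by (simp add: a_def)
qed

lemma P_at_one_pos:
  assumes "\<alpha> > 0" and "1 - 2 * \<alpha>^2 < cos (2 * \<theta>)"
  shows "P_at \<alpha> \<theta> 1 > 0"
proof -
  have "P_at \<alpha> \<theta> 1 = \<alpha>^2 + cos (2 * \<theta>) - (1 - (cos (2 * \<theta>))^2) / (4 * \<alpha>^2)"
    by (simp add: P_at_def C_at_def power_divide sin_squared_eq power_mult_distrib)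
  then have "4 * \<alpha>^2 * P_at \<alpha> \<theta> 1 = (cos (2 * \<theta>) + 2 * \<alpha>^2)^2 - 1"
    using \<open>\<alpha> > 0\<close> by (simp add: field_simps power2_eq_square)
  moreover have "(cos (2 * \<theta>) + 2 * \<alpha>^2)^2 > 1"
    using assms(2) by (simp add: one_less_power)
  ultimately have "0 < 4 * \<alpha>^2 * P_at \<alpha> \<theta> 1" by linarith
  then show ?thesis
    using \<open>\<alpha> > 0\<close> by (simp add: zero_less_mult_iff)
qed

lemma P_at_ge_min_endpoints:
  assumes "x^2 \<le> 1"
  shows "min (P_at \<alpha> \<theta> 0) (P_at \<alpha> \<theta> 1) \<le> P_at \<alpha> \<theta> x"
proof -
  define t where "t = x^2"
  define K where "K = (C_at \<alpha> \<theta>)^2"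
  define m where "m = min (P_at \<alpha> \<theta> 0) (P_at \<alpha> \<theta> 1)"
  have "0 \<le> t" "t \<le> 1" using assms by (simp_all add: t_def)
  have "P_at \<alpha> \<theta> x = (1 - t) * P_at \<alpha> \<theta> 0 + t * P_at \<alpha> \<theta> 1 + K * t * (1 - t)"
    by (simp add: P_at_def t_def K_def algebra_simps power2_eq_square power4_eq_xxxx)
  moreover have "(1 - t) * m \<le> (1 - t) * P_at \<alpha> \<theta> 0" "t * m \<le> t * P_at \<alpha> \<theta> 1"
    using \<open>0 \<le> t\<close> \<open>t \<le> 1\<close> by (auto intro: mult_left_mono simp: m_def)
  moreover have "K * t * (1 - t) \<ge> 0"
    using \<open>0 \<le> t\<close> \<open>t \<le> 1\<close> by (simp add: K_def)
  ultimately show ?thesis by (simp add: m_def[symmetric] algebra_simps)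
qed

lemma Omega_P_at_cos_lower_bound:
  assumes "(\<alpha>, \<theta>) \<in> Omega"
  obtains m where "m > 0" and "\<And>y. m \<le> P_at \<alpha> \<theta> (cos y)"
proof
  have "\<alpha> > 0" using assms by (simp add: Omega_def)
  then show "min (P_at \<alpha> \<theta> 0) (P_at \<alpha> \<theta> 1) > 0"
    using P_at_one_pos[OF _ Omega_cos_gt[OF assms]] by (simp add: P_at_def)
  show "min (P_at \<alpha> \<theta> 0) (P_at \<alpha> \<theta> 1) \<le> P_at \<alpha> \<theta> (cos y)" for y
    by (rule P_at_ge_min_endpoints) (simp add: abs_square_le_1)
qed

theorem lemma4p2:
  fixes \<alpha> \<theta> :: real and \<phi> \<phi>' :: "real \<Rightarrow> real"
  assumes "(\<alpha>, \<theta>) \<in> Omega"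
    and "\<And>u. (\<phi> has_real_derivative \<phi>' u) (at u)"
    and "\<And>u. (\<phi>' u)^2 = P_at \<alpha> \<theta> (cos (\<phi> u))"
    and "\<phi> 0 = 0"
    and "\<phi>' 0 \<le> 0"
  shows "(\<forall>u. \<phi>' u < 0)
    \<and> (\<forall>x y. x < y \<longrightarrow> \<phi> y < \<phi> x) \<and> bij \<phi>
    \<and> (\<exists>U>0. \<forall>u. \<phi> (u + U) = \<phi> u - pi)
    \<and> (\<forall>u. \<phi> (- u) = - \<phi> u)"
proof -
  note \<phi>' = assms(2) and \<phi>'_sq = assms(3)
  obtain m where "m > 0" and m: "\<And>y. m \<le> P_at \<alpha> \<theta> (cos y)"
    using Omega_P_at_cos_lower_bound[OF assms(1)] by blast
  have nonzero: "\<phi>' u \<noteq> 0" for u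
    using \<phi>'_sq[of u] m[of "\<phi> u"] \<open>m > 0\<close> by auto
  have neg: "\<phi>' u < 0" for u
    by (rule DERIV_nonvanishing_neg[OF \<phi>' nonzero]) (use nonzero[of 0] assms(5) in \<open>simp add: less_le\<close>)
  define F where "F y = - sqrt (P_at \<alpha> \<theta> (cos y))" for y
  have ode: "(\<phi> has_real_derivative F (\<phi> u)) (at u)" for u
    using \<phi>'[of u] neg[of u] \<phi>'_sq[of u, symmetric] by (simp add: F_def)
  have "sqrt m > 0" and F_le: "F y \<le> - sqrt m" for y
    using \<open>m > 0\<close> m[of y] by (simp_all add: F_def)
  then have F_neg: "F y < 0" for y
    using F_le[of y] by linarith
  have decreasing: "\<phi> y < \<phi> x" if "x < y" for x y
    using DERIV_neg_imp_decreasing[OF that] \<phi>' neg by blast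
  have "bij \<phi>"
    by (rule DERIV_le_neg_const_imp_bij[OF ode \<open>sqrt m > 0\<close> F_le])
  moreover have "\<exists>U>0. \<forall>u. \<phi> (u + U) = \<phi> u - pi"
    by (rule autonomous_ode_periodic[OF ode F_neg \<open>bij \<phi>\<close>]) (simp_all add: F_def P_at_def)
  moreover have "\<phi> (- u) = - \<phi> u" for u
    by (rule autonomous_ode_odd[OF ode F_neg[THEN less_imp_neq] \<open>bij \<phi>\<close>])
      (simp_all add: F_def assms(4))
  ultimately show ?thesis
    using neg decreasing by blast
qed

end
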